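(* Let $d\ge 1$ and let $H=(V,E)$ be a $d$-regular graph, let $E'\subseteq E$, and let $v(e)\in\mathbb Z_2^d$ be assigned to each $e\in E'$. Suppose that for every vertex $u$, the vectors $v(e)$ over all edges $e\in E'$ incident with $u$ are linearly independent. Then one can assign a vector $v(e)\in\mathbb Z_2^d$ to every edge $e\in E\setminus E'$ so that for every vertex $u$, the $d$ vectors assigned to the $d$ edges incident with $u$ form a basis of $\mathbb Z_2^d$.
   Context: All graphs are finite and simple. *)

theory Defs
  imports "HOL-Analysis.Analysis" "HOL-Library.Z2"
begin

definition simple_graph :: "'a set \<Rightarrow> 'a set set \<Rightarrow> bool" where
  "simple_graph V E \<longleftrightarrow> finite V \<and> (\<forall>e\<in>E. e \<subseteq> V \<and> card e = 2)"

definition incident_edges :: "'a set set \<Rightarrow> 'a \<Rightarrow> 'a set set" where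
  "incident_edges E u = {e \<in> E. u \<in> e}"

definition regular_graph :: "nat \<Rightarrow> 'a set \<Rightarrow> 'a set set \<Rightarrow> bool" where
  "regular_graph d V E \<longleftrightarrow> simple_graph V E \<and> (\<forall>u\<in>V. card (incident_edges E u) = d)"

text \<open>Linear independence of an indexed family (f e)_(e in S) of vectors over Z_2
  (a family with repeated vectors is dependent).\<close>
definition indep_family :: "'b set \<Rightarrow> ('b \<Rightarrow> bit ^ 'n) \<Rightarrow> bool" where
  "indep_family S f \<longleftrightarrow> inj_on f S \<and> vec.independent (f ` S)"

definition basis_family :: "'b set \<Rightarrow> ('b \<Rightarrow> bit ^ 'n) \<Rightarrow> bool" where
  "basis_family S f \<longleftrightarrow> indep_family S f \<and> vec.span (f ` S) = UNIV"

end

theory Submission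
  imports Defs
begin

text \<open>Edges outside \<open>E'\<close> are coloured one at a time. When an edge \<open>{x, y}\<close> is still
  uncoloured, fewer than \<open>d\<close> edges at \<open>x\<close> and at \<open>y\<close> carry vectors, so the vectors at each
  endpoint span a proper subspace of \<open>\<int>\<^sub>2\<^sup>d\<close>. Two proper subspaces never cover the whole
  space, so some vector lies outside both spans; assigning it to \<open>{x, y}\<close> keeps the families
  at both endpoints independent. Once every edge is coloured, each vertex carries \<open>d\<close>
  independent vectors, which form a basis.\<close>

lemma ex_not_in_two_proper_subspaces:
  fixes A B :: "('a::field ^ 'n) set"
  assumes "vec.subspace A" "vec.subspace B" "A \<noteq> UNIV" "B \<noteq> UNIV"
  shows "\<exists>z. z \<notin> A \<and> z \<notin> B"
proof (cases "A \<subseteq> B")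
  case True
  then show ?thesis using assms(4) by blast
next
  case False
  then obtain a where a: "a \<in> A" "a \<notin> B" by blast
  obtain b where b: "b \<notin> A" using assms(3) by blast
  show ?thesis
  proof (cases "b \<in> B")
    case False
    then show ?thesis using b by blast
  next
    case True
    have "a + b \<notin> A"
      using vec.subspace_diff[OF assms(1) _ a(1), of "a + b"] b by auto
    moreover have "a + b \<notin> B"
      using vec.subspace_diff[OF assms(2) _ True, of "a + b"] a by auto
    ultimately show ?thesis by blast
  qed
qed

lemma indep_family_cong:
  assumes "\<And>e. e \<in> S \<Longrightarrow> f e = g e"
  shows "indep_family S f \<longleftrightarrow> indep_family S g"
  using assms inj_on_cong[of S f g] image_cong[OF refl, of S f g]
  unfolding indep_family_def by metis

lemma indep_family_insert:
  fixes w :: "'b \<Rightarrow> bit ^ 'n"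
  assumes "indep_family S w" "e \<notin> S" "z \<notin> vec.span (w ` S)"
  shows "indep_family (insert e S) (w(e := z))"
proof -
  have indep: "vec.independent (w ` S)" and inj: "inj_on w S"
    using assms(1) unfolding indep_family_def by auto
  have image_eq: "(w(e := z)) ` S = w ` S"
    using assms(2) by (auto intro: image_cong)
  have "z \<notin> w ` S" using assms(3) vec.span_base by blast
  then have "inj_on (w(e := z)) (insert e S)"
    using inj assms(2) by (auto simp: inj_on_def)
  moreover have "vec.independent (insert z (w ` S))"
    using vec.independent_insertI[OF assms(3) indep] .
  ultimately show ?thesis
    unfolding indep_family_def image_insert fun_upd_same image_eq by simp
qed

lemma indep_family_span_eq_UNIV_iff:
  fixes w :: "'b \<Rightarrow> bit ^ 'n"
  assumes "indep_family S w" "finite S"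
  shows "vec.span (w ` S) = UNIV \<longleftrightarrow> card S = CARD('n)"
proof -
  have indep: "vec.independent (w ` S)" and inj: "inj_on w S"
    using assms(1) unfolding indep_family_def by auto
  have card_image: "card (w ` S) = card S" using card_image[OF inj] .
  show ?thesis
  proof
    assume "vec.span (w ` S) = UNIV"
    then have "vec.dim (UNIV :: (bit ^ 'n) set) = card (w ` S)"
      using vec.dim_span_eq_card_independent[OF indep] by simp
    then show "card S = CARD('n)" using vec_dim_card card_image by metis
  next
    assume "card S = CARD('n)"
    then have "card (w ` S) = vec.dim (UNIV :: (bit ^ 'n) set)"
      using vec_dim_card card_image by metis
    then show "vec.span (w ` S) = UNIV"
      using vec.card_eq_dim[of "w ` S" UNIV] assms(2) indep by auto
  qed
qed

lemma simple_graph_finite_edges: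
  assumes "simple_graph V E"
  shows "finite E"
proof -
  have "E \<subseteq> Pow V" using assms unfolding simple_graph_def by auto
  then show ?thesis
    using assms unfolding simple_graph_def by (meson finite_Pow_iff rev_finite_subset)
qed

lemma finite_incident_edges: "finite E \<Longrightarrow> finite (incident_edges E u)"
  unfolding incident_edges_def by simp

lemma incident_edges_insert:
  "incident_edges (insert e F) u =
    (if u \<in> e then insert e (incident_edges F u) else incident_edges F u)"
  unfolding incident_edges_def by auto

lemma regular_graph_card_incident_less:
  assumes "regular_graph d V E" "F \<subseteq> E" "e \<in> E - F" "x \<in> e"
  shows "card (incident_edges F x) < d"
proof -
  have "x \<in> V" and "finite E"
    using assms simple_graph_finite_edges unfolding regular_graph_def simple_graph_def by auto
  moreover have "incident_edges F x \<subset> incident_edges E x"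
    using assms(2-4) unfolding incident_edges_def by auto
  ultimately show ?thesis
    using assms(1) psubset_card_mono[OF finite_incident_edges] unfolding regular_graph_def by metis
qed

lemma regular_graph_extend_indep_by_edge:
  fixes w :: "'a set \<Rightarrow> bit ^ 'n"
  assumes "regular_graph CARD('n) V E" "F \<subseteq> E" "e \<in> E - F"
    and indep: "\<forall>u\<in>V. indep_family (incident_edges F u) w"
  shows "\<exists>z. \<forall>u\<in>V. indep_family (incident_edges (insert e F) u) (w(e := z))"
proof -
  have simple: "simple_graph V E" using assms(1) unfolding regular_graph_def by simp
  then obtain x y where e: "e = {x, y}" and "x \<in> V" "y \<in> V"
    using assms(3) unfolding simple_graph_def by (auto simp: card_2_iff)
  have finite_F: "finite F"
    using simple_graph_finite_edges[OF simple] assms(2) by (rule rev_finite_subset)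
  have proper: "vec.span (w ` incident_edges F t) \<noteq> UNIV" if "t \<in> e" for t
  proof -
    have "t \<in> V" using that e \<open>x \<in> V\<close> \<open>y \<in> V\<close> by auto
    then have "indep_family (incident_edges F t) w" using indep by blast
    moreover have "card (incident_edges F t) \<noteq> CARD('n)"
      using regular_graph_card_incident_less[OF assms(1-3) that] by linarith
    ultimately show ?thesis
      using indep_family_span_eq_UNIV_iff[OF _ finite_incident_edges[OF finite_F]] by blast
  qed
  have "x \<in> e" "y \<in> e" using e by simp_all
  then obtain z where z_x: "z \<notin> vec.span (w ` incident_edges F x)"
    and z_y: "z \<notin> vec.span (w ` incident_edges F y)"
    using ex_not_in_two_proper_subspaces[OF vec.subspace_span vec.subspace_span proper proper]
    by blast
  have "indep_family (incident_edges (insert e F) u) (w(e := z))" if "u \<in> V" for u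
  proof (cases "u \<in> e")
    case True
    have e_notin: "e \<notin> incident_edges F u" using assms(3) unfolding incident_edges_def by auto
    from True e have "u = x \<or> u = y" by blast
    then have z_notin: "z \<notin> vec.span (w ` incident_edges F u)"
      by (elim disjE) (simp_all only: z_x z_y not_False_eq_True)
    have "indep_family (insert e (incident_edges F u)) (w(e := z))"
      using indep_family_insert[OF indep[rule_format, OF that] e_notin z_notin] .
    then show ?thesis using True by (simp only: incident_edges_insert if_True)
  next
    case False
    then have "e \<notin> incident_edges F u" unfolding incident_edges_def by auto
    then have "indep_family (incident_edges F u) (w(e := z)) \<longleftrightarrow>
        indep_family (incident_edges F u) w"
      by (intro indep_family_cong) auto
    then have "indep_family (incident_edges F u) (w(e := z))" using indep that by blast
    then show ?thesis using False by (simp only: incident_edges_insert if_False)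
  qed
  then show ?thesis by blast
qed

lemma regular_graph_extend_indep:
  fixes v :: "'a set \<Rightarrow> bit ^ 'n"
  assumes "regular_graph CARD('n) V E" "E' \<subseteq> E"
    and "\<forall>u\<in>V. indep_family (incident_edges E' u) v"
    and "finite A" "A \<subseteq> E - E'"
  shows "\<exists>w. (\<forall>e\<in>E'. w e = v e) \<and> (\<forall>u\<in>V. indep_family (incident_edges (A \<union> E') u) w)"
  using assms(4,5)
proof (induction A rule: finite_induct)
  case empty
  then show ?case using assms(3) by auto
next
  case (insert e A)
  then obtain w where agree: "\<forall>e\<in>E'. w e = v e"
    and indep: "\<forall>u\<in>V. indep_family (incident_edges (A \<union> E') u) w"
    by auto
  have "A \<union> E' \<subseteq> E" "e \<in> E - (A \<union> E')" using insert assms(2) by auto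
  then obtain z where "\<forall>u\<in>V. indep_family (incident_edges (insert e (A \<union> E')) u) (w(e := z))"
    using regular_graph_extend_indep_by_edge[OF assms(1) _ _ indep] by blast
  moreover have "\<forall>e'\<in>E'. (w(e := z)) e' = v e'" using agree insert.prems by auto
  ultimately show ?case by (metis Un_insert_left)
qed

theorem lemma2p2:
  fixes V :: "'a set" and E E' :: "'a set set" and v :: "'a set \<Rightarrow> bit ^ 'n"
  assumes "regular_graph CARD('n) V E"
    and "E' \<subseteq> E"
    and "\<forall>u\<in>V. indep_family (incident_edges E' u) v"
  shows "\<exists>w :: 'a set \<Rightarrow> bit ^ 'n. (\<forall>e\<in>E'. w e = v e) \<and>
           (\<forall>u\<in>V. basis_family (incident_edges E u) w)"
proof -
  have finite_E: "finite E"
    using assms(1) simple_graph_finite_edges unfolding regular_graph_def by blast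
  have "(E - E') \<union> E' = E" using assms(2) by auto
  then obtain w where agree: "\<forall>e\<in>E'. w e = v e"
    and indep: "\<forall>u\<in>V. indep_family (incident_edges E u) w"
    using regular_graph_extend_indep[OF assms, of "E - E'"] finite_E by auto
  have "basis_family (incident_edges E u) w" if "u \<in> V" for u
    using indep that assms(1) indep_family_span_eq_UNIV_iff[OF _ finite_incident_edges[OF finite_E]]
    unfolding basis_family_def regular_graph_def by auto
  then show ?thesis using agree by blast
qed

end
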